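(* Let $n\geq1$ and $\sigma\in\mathfrak{S}_n$. For every packed word $f$ with $\mathrm{Std}(f)=\sigma$ one has $M(f)\subseteq M(\sigma)$, and the map $$\phi_\sigma:\{f\text{ packed word}\mid\mathrm{Std}(f)=\sigma\}\longrightarrow\{I\mid I\subseteq M(\sigma)\},\qquad f\longmapsto M(f),$$ is bijective.
   Context: $[n]=\{1,\ldots,n\}$. A packed word of length $n$ is a word $f=f(1)\ldots f(n)$ of positive integers with $\{f(1),\ldots,f(n)\}=[\max f]$; $\mathfrak{S}_n$ is the set of permutations of $[n]$, viewed as packed words $\sigma(1)\ldots\sigma(n)$. The standardization $\mathrm{Std}(f)$ of a packed word $f$ of length $n$ is the unique $\sigma\in\mathfrak{S}_n$ such that for all $i,j$: $f(i)<f(j)\Rightarrow\sigma(i)<\sigma(j)$, and ($f(i)=f(j)$ and $i<j$) $\Rightarrow\sigma(i)<\sigma(j)$. For a packed word $f$ of length $n$, $M(f)$ is the set of $i\in[n]$ such that: $f(i)<\max f$; for all $j\in[n]$, $f(j)=f(i)\Rightarrow j\leq i$; and for all $j\in[n]$, $f(j)=f(i)+1\Rightarrow j>i$. *)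

theory Defs
  imports Main
begin

text \<open>Words are lists of positive integers; position i (1-based) of f is f ! (i - 1).\<close>

definition at :: "nat list \<Rightarrow> nat \<Rightarrow> nat" where
  "at f i = f ! (i - 1)"

definition packed_word :: "nat list \<Rightarrow> bool" where
  "packed_word f \<longleftrightarrow> set f = {1..Max (set f)} \<and> f \<noteq> []"

definition is_perm :: "nat \<Rightarrow> nat list \<Rightarrow> bool" where
  "is_perm n \<sigma> \<longleftrightarrow> length \<sigma> = n \<and> set \<sigma> = {1..n}"

definition Std :: "nat list \<Rightarrow> nat list" where
  "Std f = (THE \<sigma>. is_perm (length f) \<sigma> \<and>
     (\<forall>i\<in>{1..length f}. \<forall>j\<in>{1..length f}.
        (at f i < at f j \<longrightarrow> at \<sigma> i < at \<sigma> j) \<and>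
        (at f i = at f j \<and> i < j \<longrightarrow> at \<sigma> i < at \<sigma> j)))"

definition M :: "nat list \<Rightarrow> nat set" where
  "M f = {i\<in>{1..length f}. at f i < Max (set f) \<and>
     (\<forall>j\<in>{1..length f}. at f j = at f i \<longrightarrow> j \<le> i) \<and>
     (\<forall>j\<in>{1..length f}. at f j = at f i + 1 \<longrightarrow> j > i)}"

end

theory Submission imports Defs begin

text \<open>List the positions in increasing order of their \<sigma>-value, i.e. p(k) with \<sigma>(p(k)) = k.
  A packed word f standardizes to \<sigma> exactly when k \<mapsto> f(p(k)) starts at 1, is weakly increasing
  with steps of size 0 or 1, and must step up wherever p(k+1) < p(k). The remaining steps, those
  with p(k) < p(k+1), correspond to the elements p(k) of M(\<sigma>), and f steps up there exactly when
  p(k) \<in> M(f). Hence f is determined by M(f), and every subset of M(\<sigma>) arises.\<close>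

definition std_compatible :: "nat list \<Rightarrow> nat list \<Rightarrow> bool" where
  "std_compatible f \<sigma> \<longleftrightarrow> (\<forall>i\<in>{1..length f}. \<forall>j\<in>{1..length f}.
        (at f i < at f j \<longrightarrow> at \<sigma> i < at \<sigma> j) \<and>
        (at f i = at f j \<and> i < j \<longrightarrow> at \<sigma> i < at \<sigma> j))"

lemma set_eq_at_image: "set xs = at xs ` {1..length xs}"
proof
  show "set xs \<subseteq> at xs ` {1..length xs}"
  proof
    fix x assume "x \<in> set xs"
    then obtain k where "k < length xs" "xs ! k = x" by (auto simp: in_set_conv_nth)
    then show "x \<in> at xs ` {1..length xs}"
      by (intro image_eqI[of _ _ "Suc k"]) (auto simp: at_def)
  qed
qed (auto simp: at_def)

lemma list_eq_iff_at_eq: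
  "length xs = length ys \<Longrightarrow> (\<And>i. i \<in> {1..length xs} \<Longrightarrow> at xs i = at ys i) \<Longrightarrow> xs = ys"
proof (rule nth_equalityI)
  fix k assume "length xs = length ys" "\<And>i. i \<in> {1..length xs} \<Longrightarrow> at xs i = at ys i" "k < length xs"
  then show "xs ! k = ys ! k" by (metis Suc_leI atLeastAtMost_iff at_def diff_Suc_1 le_add1 plus_1_eq_Suc)
qed

lemma at_map_upt: "i \<in> {1..n} \<Longrightarrow> at (map g [1..<n+1]) i = g i"
  by (auto simp: at_def simp del: upt_Suc)

lemma exists_perm_ranking:
  fixes g :: "nat \<Rightarrow> nat"
  assumes inj: "inj_on g {1..n}"
  obtains \<tau> where "is_perm n \<tau>" "\<And>i j. i \<in> {1..n} \<Longrightarrow> j \<in> {1..n} \<Longrightarrow> g i < g j \<Longrightarrow> at \<tau> i < at \<tau> j"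
proof -
  define r where "r i = Suc (card {j\<in>{1..n}. g j < g i})" for i
  define \<tau> where "\<tau> = map r [1..<n+1]"
  have r_less: "r i < r j" if "i \<in> {1..n}" "j \<in> {1..n}" "g i < g j" for i j
  proof -
    have "{k\<in>{1..n}. g k < g i} \<subset> {k\<in>{1..n}. g k < g j}"
      using that by auto
    then show ?thesis by (auto simp: r_def intro: psubset_card_mono)
  qed
  have "inj_on r {1..n}"
  proof (rule inj_onI)
    fix i j assume ij: "i \<in> {1..n}" "j \<in> {1..n}" "r i = r j"
    with inj have "\<not> g i < g j" "\<not> g j < g i" using r_less by fastforce+
    with inj ij show "i = j" by (meson inj_onD linorder_neqE_nat)
  qed
  moreover have "r i \<in> {1..n}" if "i \<in> {1..n}" for i
  proof -
    have "card {k\<in>{1..n}. g k < g i} \<le> card ({1..n} - {i})" by (intro card_mono) auto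
    with that show ?thesis by (auto simp: r_def)
  qed
  ultimately have "r ` {1..n} = {1..n}"
    by (intro card_subset_eq) (auto simp: card_image simp del: atLeastAtMost_iff)
  moreover have "set \<tau> = r ` {1..n}" by (auto simp: \<tau>_def)
  ultimately have "is_perm n \<tau>" by (simp add: is_perm_def \<tau>_def)
  moreover have "at \<tau> i = r i" if "i \<in> {1..n}" for i
    unfolding \<tau>_def using that by (rule at_map_upt)
  ultimately show ?thesis using that r_less by simp
qed

lemma exists_std_compatible_perm: "\<exists>\<tau>. is_perm (length f) \<tau> \<and> std_compatible f \<tau>"
proof -
  define n where "n = length f"
  \<comment> \<open>lexicographic key (value, position)\<close>
  define g where "g i = at f i * (n+1) + i" for i
  have g_less: "g i < g j" if "i \<in> {1..n}" "at f i < at f j \<or> (at f i = at f j \<and> i < j)" for i j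
  proof (cases "at f i < at f j")
    case True
    have "at f i * (n+1) + i < (at f i + 1) * (n+1)" using that by simp
    also have "\<dots> \<le> at f j * (n+1)" using True by (intro mult_le_mono1) simp
    finally show ?thesis by (simp add: g_def)
  qed (use that in \<open>simp add: g_def\<close>)
  have "inj_on g {1..n}"
  proof (rule inj_onI)
    fix i j assume ij: "i \<in> {1..n}" "j \<in> {1..n}" "g i = g j"
    show "i = j"
      using g_less[of i j] g_less[of j i] ij by (metis less_irrefl linorder_neqE_nat)
  qed
  then obtain \<tau> where "is_perm n \<tau>" "\<And>i j. i \<in> {1..n} \<Longrightarrow> j \<in> {1..n} \<Longrightarrow> g i < g j \<Longrightarrow> at \<tau> i < at \<tau> j"
    using exists_perm_ranking by blast
  then show ?thesis using g_less unfolding std_compatible_def n_def[symmetric] by blast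
qed

locale perm_list =
  fixes n :: nat and \<sigma> :: "nat list"
  assumes is_perm: "is_perm n \<sigma>"
begin

lemma length_perm: "length \<sigma> = n" and set_perm: "set \<sigma> = {1..n}"
  using is_perm by (simp_all add: is_perm_def)

lemma at_perm_image: "at \<sigma> ` {1..n} = {1..n}"
  by (metis length_perm set_eq_at_image set_perm)

lemma at_perm_in_range: "i \<in> {1..n} \<Longrightarrow> at \<sigma> i \<in> {1..n}"
  using at_perm_image by blast

lemma exists_at_perm_eq: "v \<in> {1..n} \<Longrightarrow> \<exists>i\<in>{1..n}. at \<sigma> i = v"
  using at_perm_image by (metis imageE)

lemma inj_on_at_perm: "inj_on (at \<sigma>) {1..n}"
  using at_perm_image length_perm by (intro eq_card_imp_inj_on) simp_all

lemma at_perm_eq_iff: "i \<in> {1..n} \<Longrightarrow> j \<in> {1..n} \<Longrightarrow> at \<sigma> i = at \<sigma> j \<longleftrightarrow> i = j"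
  using inj_on_at_perm by (auto dest: inj_onD)

lemma at_perm_eq_rank:
  assumes "i \<in> {1..n}"
  shows "at \<sigma> i = Suc (card {j\<in>{1..n}. at \<sigma> j < at \<sigma> i})"
proof -
  have "at \<sigma> ` {j\<in>{1..n}. at \<sigma> j < at \<sigma> i} = {v\<in>at \<sigma> ` {1..n}. v < at \<sigma> i}"
    by blast
  also have "\<dots> = {1..<at \<sigma> i}"
    using at_perm_in_range[OF assms] unfolding at_perm_image by auto
  finally have "at \<sigma> ` {j\<in>{1..n}. at \<sigma> j < at \<sigma> i} = {1..<at \<sigma> i}" .
  moreover have "inj_on (at \<sigma>) {j\<in>{1..n}. at \<sigma> j < at \<sigma> i}"
    by (rule inj_on_subset[OF inj_on_at_perm]) auto
  ultimately have "card {j\<in>{1..n}. at \<sigma> j < at \<sigma> i} = card {1..<at \<sigma> i}"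
    by (metis card_image)
  with at_perm_in_range[OF assms] show ?thesis by simp
qed

end

lemma std_compatible_less_iff:
  assumes "std_compatible f \<sigma>" "i \<in> {1..length f}" "j \<in> {1..length f}"
  shows "at \<sigma> j < at \<sigma> i \<longleftrightarrow> at f j < at f i \<or> (at f j = at f i \<and> j < i)"
proof -
  have "at f i < at f j \<or> (at f i = at f j \<and> i < j) \<or> i = j \<or> at f j < at f i \<or> (at f j = at f i \<and> j < i)"
    by arith
  with assms show ?thesis unfolding std_compatible_def by (metis less_not_sym)
qed

lemma std_compatible_perm_unique:
  assumes "is_perm (length f) \<sigma>" "std_compatible f \<sigma>" "is_perm (length f) \<tau>" "std_compatible f \<tau>"
  shows "\<sigma> = \<tau>"
proof (rule list_eq_iff_at_eq)
  interpret \<sigma>: perm_list "length f" \<sigma> by (rule perm_list.intro) fact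
  interpret \<tau>: perm_list "length f" \<tau> by (rule perm_list.intro) fact
  show "length \<sigma> = length \<tau>" using \<sigma>.length_perm \<tau>.length_perm by simp
  fix i assume "i \<in> {1..length \<sigma>}"
  then have i: "i \<in> {1..length f}" using \<sigma>.length_perm by simp
  have "{j\<in>{1..length f}. at \<sigma> j < at \<sigma> i} = {j\<in>{1..length f}. at \<tau> j < at \<tau> i}"
    using std_compatible_less_iff[OF assms(2) i] std_compatible_less_iff[OF assms(4) i] by auto
  then show "at \<sigma> i = at \<tau> i"
    using \<sigma>.at_perm_eq_rank[OF i] \<tau>.at_perm_eq_rank[OF i] by simp
qed

lemma Std_spec: "is_perm (length f) (Std f) \<and> std_compatible f (Std f)"
proof -
  have "\<exists>!\<tau>. is_perm (length f) \<tau> \<and> std_compatible f \<tau>"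
    using exists_std_compatible_perm std_compatible_perm_unique by blast
  from theI'[OF this] show ?thesis unfolding Std_def std_compatible_def .
qed

lemma Std_eq_iff: "is_perm (length f) \<sigma> \<Longrightarrow> Std f = \<sigma> \<longleftrightarrow> std_compatible f \<sigma>"
  using Std_spec[of f] std_compatible_perm_unique[of f \<sigma> "Std f"] by auto

context perm_list
begin

lemma mem_M_perm_iff:
  "j \<in> M \<sigma> \<longleftrightarrow> j \<in> {1..n} \<and> at \<sigma> j < n \<and> (\<forall>i\<in>{1..n}. at \<sigma> i = at \<sigma> j + 1 \<longrightarrow> j < i)"
proof (cases "n = 0")
  case False
  then have "Max (set \<sigma>) = n" unfolding set_perm by (intro Max_eqI) auto
  then show ?thesis unfolding M_def length_perm using at_perm_eq_iff by auto
qed (simp add: M_def length_perm)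

lemma std_compatibleI:
  assumes "length f = n"
    and mono: "\<And>i j. i \<in> {1..n} \<Longrightarrow> j \<in> {1..n} \<Longrightarrow> at \<sigma> i \<le> at \<sigma> j \<Longrightarrow> at f i \<le> at f j"
    and descent: "\<And>i j. i \<in> {1..n} \<Longrightarrow> j \<in> {1..n} \<Longrightarrow> at \<sigma> j = at \<sigma> i + 1 \<Longrightarrow> j < i \<Longrightarrow> at f i < at f j"
  shows "std_compatible f \<sigma>"
proof -
  \<comment> \<open>a constant stretch of f along \<sigma> contains no descent, so its positions increase\<close>
  have constant_stretch: "j \<le> i"
    if "i \<in> {1..n}" "j \<in> {1..n}" "at \<sigma> i = at \<sigma> j + d" "at f i = at f j" for d i j
    using that
  proof (induction d arbitrary: i)
    case 0
    then show ?case using at_perm_eq_iff by simp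
  next
    case (Suc d)
    have "at \<sigma> j + d \<in> {1..n}"
      using at_perm_in_range[OF Suc.prems(1)] at_perm_in_range[OF Suc.prems(2)] Suc.prems(3) by auto
    then obtain l where l: "l \<in> {1..n}" "at \<sigma> l = at \<sigma> j + d" using exists_at_perm_eq by blast
    have "at f j \<le> at f l" "at f l \<le> at f i"
      using mono[OF Suc.prems(2) l(1)] mono[OF l(1) Suc.prems(1)] l Suc.prems(3) by simp_all
    then have "at f l = at f j" using Suc.prems(4) by simp
    then have "j \<le> l" using Suc.IH l Suc.prems(2) by blast
    moreover have "l \<le> i"
    proof (rule ccontr)
      assume "\<not> l \<le> i"
      then have "at f l < at f i" using descent[OF l(1) Suc.prems(1)] l(2) Suc.prems(3) by simp
      with \<open>at f l = at f j\<close> Suc.prems(4) show False by simp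
    qed
    ultimately show ?case by simp
  qed
  show ?thesis unfolding std_compatible_def \<open>length f = n\<close>
  proof (intro ballI conjI impI)
    fix i j assume ij: "i \<in> {1..n}" "j \<in> {1..n}"
    show "at \<sigma> i < at \<sigma> j" if "at f i < at f j"
    proof (rule ccontr)
      assume "\<not> at \<sigma> i < at \<sigma> j"
      with mono[OF ij(2,1)] that show False by simp
    qed
    show "at \<sigma> i < at \<sigma> j" if "at f i = at f j \<and> i < j"
    proof (rule ccontr)
      assume "\<not> at \<sigma> i < at \<sigma> j"
      then have "at \<sigma> i = at \<sigma> j + (at \<sigma> i - at \<sigma> j)" by simp
      with constant_stretch[OF ij] that show False by simp
    qed
  qed
qed

end

locale std_preimage = perm_list +
  fixes f :: "nat list"
  assumes packed: "packed_word f" and Std_word: "Std f = \<sigma>"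
begin

lemma length_word: "length f = n" and compatible: "std_compatible f \<sigma>"
  using Std_spec[of f] Std_word length_perm by (auto simp: is_perm_def)

lemma word_mono: "i \<in> {1..n} \<Longrightarrow> j \<in> {1..n} \<Longrightarrow> at \<sigma> i \<le> at \<sigma> j \<Longrightarrow> at f i \<le> at f j"
  using compatible length_word unfolding std_compatible_def by fastforce

lemma word_tie: "i \<in> {1..n} \<Longrightarrow> j \<in> {1..n} \<Longrightarrow> at f i = at f j \<Longrightarrow> i < j \<Longrightarrow> at \<sigma> i < at \<sigma> j"
  using compatible length_word by (simp add: std_compatible_def)

lemma word_descent:
  assumes "i \<in> {1..n}" "j \<in> {1..n}" "at \<sigma> j = at \<sigma> i + 1" "j < i"
  shows "at f i < at f j"
proof -
  have "at f i \<le> at f j" using word_mono[OF assms(1,2)] assms(3) by simp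
  moreover have "at f i \<noteq> at f j" using word_tie[OF assms(2,1) _ assms(4)] assms(3) by auto
  ultimately show ?thesis by simp
qed

lemma at_word_image: "at f ` {1..n} = {1..Max (set f)}"
  using packed set_eq_at_image[of f] length_word by (simp add: packed_word_def)

lemma at_word_in_range: "i \<in> {1..n} \<Longrightarrow> at f i \<in> {1..Max (set f)}"
  using at_word_image by blast

lemma M_word_iff:
  "j \<in> M f \<longleftrightarrow> j \<in> {1..n} \<and> at f j < Max (set f) \<and>
     (\<forall>l\<in>{1..n}. at f l = at f j \<longrightarrow> l \<le> j) \<and> (\<forall>l\<in>{1..n}. at f l = at f j + 1 \<longrightarrow> j < l)"
  unfolding M_def length_word by blast

lemma at_successor_le:
  assumes "i \<in> {1..n}" "j \<in> {1..n}" "at \<sigma> i = at \<sigma> j + 1"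
  shows "at f i \<le> at f j + 1"
proof (rule ccontr)
  assume contra: "\<not> ?thesis"
  \<comment> \<open>packedness forces the value at f j + 1 to occur, strictly between j and i along \<sigma>\<close>
  then have "at f j + 1 \<in> {1..Max (set f)}"
    using at_word_in_range[OF assms(1)] by (simp only: atLeastAtMost_iff) arith
  then have "at f j + 1 \<in> at f ` {1..n}" unfolding at_word_image .
  then obtain l where l: "l \<in> {1..n}" "at f l = at f j + 1" by (metis imageE)
  have "\<not> at \<sigma> l \<le> at \<sigma> j" "\<not> at \<sigma> i \<le> at \<sigma> l"
    using word_mono[OF l(1) assms(2)] word_mono[OF assms(1) l(1)] l(2) contra by auto
  with assms(3) show False by simp
qed

lemma mem_M_word_iff_step:
  assumes i: "i \<in> {1..n}" and j: "j \<in> {1..n}" and "at \<sigma> i = at \<sigma> j + 1" "j < i"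
  shows "j \<in> M f \<longleftrightarrow> at f i = at f j + 1"
proof
  assume "j \<in> M f"
  then have "at f i \<noteq> at f j" using M_word_iff i \<open>j < i\<close> by fastforce
  with word_mono[OF j i] at_successor_le[OF i j] assms(3) show "at f i = at f j + 1" by simp
next
  assume step: "at f i = at f j + 1"
  have "at f j < Max (set f)"
    using at_word_in_range[OF i] step by simp
  moreover have "l \<le> j" if "l \<in> {1..n}" "at f l = at f j" for l
  proof (rule ccontr)
    assume "\<not> l \<le> j"
    then have "at \<sigma> i \<le> at \<sigma> l" using word_tie[OF j that(1)] that(2) assms(3) by simp
    then show False using word_mono[OF i that(1)] that(2) step by simp
  qed
  moreover have "j < l" if "l \<in> {1..n}" "at f l = at f j + 1" for l
  proof (rule ccontr)
    assume "\<not> j < l"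
    then have "l < i" using \<open>j < i\<close> that(2) by (cases "l = j") auto
    then have "at \<sigma> l \<le> at \<sigma> j" using word_tie[OF that(1) i] that(2) step assms(3) by simp
    then show False using word_mono[OF that(1) j] that(2) by simp
  qed
  ultimately show "j \<in> M f" using M_word_iff j by blast
qed

lemma at_successor:
  assumes "i \<in> {1..n}" "j \<in> {1..n}" "at \<sigma> i = at \<sigma> j + 1"
  shows "at f i = at f j + (if j < i \<and> j \<notin> M f then 0 else 1)"
proof (cases "i < j")
  case True
  then show ?thesis using word_descent[OF assms(2,1,3)] at_successor_le[OF assms] by simp
next
  case False
  then have "j < i" using assms(3) by (cases "i = j") auto
  with mem_M_word_iff_step[OF assms] word_mono[OF assms(2,1)] at_successor_le[OF assms] assms(3)
  show ?thesis by auto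
qed

lemma M_word_subset: "M f \<subseteq> M \<sigma>"
proof
  fix j assume jM: "j \<in> M f"
  then have j: "j \<in> {1..n}" "at f j < Max (set f)" using M_word_iff by blast+
  have "Max (set f) \<in> at f ` {1..n}" using at_word_image j(2) by simp
  then obtain l where l: "l \<in> {1..n}" "at f l = Max (set f)" by (metis imageE)
  have "at \<sigma> j < n"
    using word_mono[OF l(1) j(1)] l(2) j(2) at_perm_in_range[OF l(1)] by fastforce
  moreover have "j < i" if "i \<in> {1..n}" "at \<sigma> i = at \<sigma> j + 1" for i
  proof (rule ccontr)
    assume "\<not> j < i"
    then have "at f i = at f j + 1" using at_successor[OF that(1) j(1) that(2)] by simp
    then show False using jM M_word_iff that(1) \<open>\<not> j < i\<close> by blast
  qed
  ultimately show "j \<in> M \<sigma>" using mem_M_perm_iff j(1) by blast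
qed

lemma at_word_first:
  assumes "i \<in> {1..n}" "at \<sigma> i = 1"
  shows "at f i = 1"
proof -
  have "1 \<in> {1..Max (set f)}" using at_word_in_range[OF assms(1)] by simp
  then obtain l where l: "l \<in> {1..n}" "at f l = 1"
    unfolding at_word_image[symmetric] by (metis imageE)
  have "at \<sigma> i \<le> at \<sigma> l" using at_perm_in_range[OF l(1)] assms(2) by simp
  with word_mono[OF assms(1) l(1)] l(2) at_word_in_range[OF assms(1)] show ?thesis by simp
qed

end

context perm_list
begin

lemma std_preimage_eqI:
  assumes "std_preimage n \<sigma> f" "std_preimage n \<sigma> g" "M f = M g"
  shows "f = g"
proof -
  interpret f: std_preimage n \<sigma> f by fact
  interpret g: std_preimage n \<sigma> g by fact
  have "at f i = at g i" if "i \<in> {1..n}" "at \<sigma> i = k" for k i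
    using that
  proof (induction k arbitrary: i)
    case 0
    then show ?case using at_perm_in_range by fastforce
  next
    case (Suc k)
    show ?case
    proof (cases "k = 0")
      case True
      then show ?thesis using f.at_word_first g.at_word_first Suc.prems by simp
    next
      case False
      then have "k \<in> {1..n}" using at_perm_in_range[OF Suc.prems(1)] Suc.prems(2) by simp
      then obtain j where j: "j \<in> {1..n}" "at \<sigma> j = k" using exists_at_perm_eq by blast
      then show ?thesis
        using Suc.IH[OF j] f.at_successor[OF Suc.prems(1) j(1)] g.at_successor[OF Suc.prems(1) j(1)]
          Suc.prems(2) assms(3) by simp
    qed
  qed
  then show ?thesis using list_eq_iff_at_eq f.length_word g.length_word by simp
qed

end

text \<open>The word attached to J \<subseteq> M(\<sigma>): walk through the positions in increasing \<sigma>-value and step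
  the value up after position j iff j \<in> J or the next position lies to the left of j.\<close>

definition steps_up :: "nat \<Rightarrow> nat list \<Rightarrow> nat set \<Rightarrow> nat \<Rightarrow> bool" where
  "steps_up n \<sigma> J k \<longleftrightarrow>
     (\<exists>j\<in>{1..n}. at \<sigma> j = k \<and> (j \<in> J \<or> (\<exists>i\<in>{1..n}. at \<sigma> i = k + 1 \<and> i < j)))"

primrec level :: "(nat \<Rightarrow> bool) \<Rightarrow> nat \<Rightarrow> nat" where
  "level s 0 = 1"
| "level s (Suc k) = level s k + (if s (Suc k) then 1 else 0)"

definition word_of_subset :: "nat \<Rightarrow> nat list \<Rightarrow> nat set \<Rightarrow> nat list" where
  "word_of_subset n \<sigma> J = map (\<lambda>i. level (steps_up n \<sigma> J) (at \<sigma> i - 1)) [1..<n+1]"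

lemma level_mono: "a \<le> b \<Longrightarrow> level s a \<le> level s b"
  by (induction b) (auto simp: le_Suc_eq)

lemma level_pred: "1 \<le> k \<Longrightarrow> level s k = level s (k - 1) + (if s k then 1 else 0)"
  by (cases k) auto

lemma level_image: "level s ` {0..m} = {1..level s m}"
proof (induction m)
  case (Suc m)
  have "{0..Suc m} = insert (Suc m) {0..m}" by auto
  with Suc level_mono[of 0 m s] show ?case by auto
qed simp

context perm_list
begin

lemma steps_up_at_perm_iff:
  "j \<in> {1..n} \<Longrightarrow>
    steps_up n \<sigma> J (at \<sigma> j) \<longleftrightarrow> j \<in> J \<or> (\<exists>i\<in>{1..n}. at \<sigma> i = at \<sigma> j + 1 \<and> i < j)"
  unfolding steps_up_def using at_perm_eq_iff by auto

lemma length_word_of_subset: "length (word_of_subset n \<sigma> J) = n"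
  by (simp add: word_of_subset_def)

lemma at_word_of_subset:
  "i \<in> {1..n} \<Longrightarrow> at (word_of_subset n \<sigma> J) i = level (steps_up n \<sigma> J) (at \<sigma> i - 1)"
  unfolding word_of_subset_def by (rule at_map_upt)

lemma packed_word_of_subset:
  assumes "1 \<le> n"
  shows "packed_word (word_of_subset n \<sigma> J)"
proof -
  let ?s = "steps_up n \<sigma> J"
  have shift: "(\<lambda>v. v - 1) ` {1..n} = {0..n - 1}"
    using assms by (auto intro!: image_eqI[of _ _ "Suc _"])
  have "set (word_of_subset n \<sigma> J) = (\<lambda>i. level ?s (at \<sigma> i - 1)) ` {1..n}"
    by (simp add: word_of_subset_def atLeastLessThanSuc_atLeastAtMost del: upt_Suc)
  also have "\<dots> = level ?s ` ((\<lambda>v. v - 1) ` at \<sigma> ` {1..n})"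
    by (simp add: image_image)
  also have "\<dots> = level ?s ` {0..n - 1}"
    unfolding at_perm_image shift ..
  also have "\<dots> = {1..level ?s (n - 1)}" by (rule level_image)
  finally have "set (word_of_subset n \<sigma> J) = {1..level ?s (n - 1)}" .
  moreover have "Max {1..level ?s (n - 1)} = level ?s (n - 1)"
    using level_mono[of 0 "n - 1" ?s] by (intro Max_eqI) auto
  moreover have "word_of_subset n \<sigma> J \<noteq> []"
    using assms length_word_of_subset by (metis list.size(3) not_one_le_zero)
  ultimately show ?thesis by (simp add: packed_word_def)
qed

lemma level_at_successor:
  assumes "i \<in> {1..n}" "j \<in> {1..n}" "at \<sigma> i = at \<sigma> j + 1"
  shows "level s (at \<sigma> i - 1) = level s (at \<sigma> j - 1) + (if s (at \<sigma> j) then 1 else 0)"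
  using level_pred[of "at \<sigma> j" s] at_perm_in_range[OF assms(2)] assms(3) by simp

lemma Std_word_of_subset: "Std (word_of_subset n \<sigma> J) = \<sigma>"
proof -
  have "std_compatible (word_of_subset n \<sigma> J) \<sigma>"
  proof (rule std_compatibleI[OF length_word_of_subset])
    fix i j assume "i \<in> {1..n}" "j \<in> {1..n}" "at \<sigma> i \<le> at \<sigma> j"
    then show "at (word_of_subset n \<sigma> J) i \<le> at (word_of_subset n \<sigma> J) j"
      by (simp add: at_word_of_subset level_mono)
  next
    fix i j assume ij: "i \<in> {1..n}" "j \<in> {1..n}" "at \<sigma> j = at \<sigma> i + 1" "j < i"
    then have "steps_up n \<sigma> J (at \<sigma> i)" using steps_up_at_perm_iff by blast
    then show "at (word_of_subset n \<sigma> J) i < at (word_of_subset n \<sigma> J) j"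
      using level_at_successor[OF ij(2,1,3)] ij(1,2) by (simp add: at_word_of_subset)
  qed
  then show ?thesis using is_perm length_word_of_subset by (simp add: Std_eq_iff)
qed

lemma std_preimage_word_of_subset: "1 \<le> n \<Longrightarrow> std_preimage n \<sigma> (word_of_subset n \<sigma> J)"
  using packed_word_of_subset Std_word_of_subset by unfold_locales

lemma M_word_of_subset:
  assumes "1 \<le> n" "J \<subseteq> M \<sigma>"
  shows "M (word_of_subset n \<sigma> J) = J"
proof -
  let ?g = "word_of_subset n \<sigma> J"
  interpret g: std_preimage n \<sigma> ?g
    using std_preimage_word_of_subset[OF assms(1)] .
  have "j \<in> M ?g \<longleftrightarrow> j \<in> J" if jM: "j \<in> M \<sigma>" for j
  proof -
    from jM have j: "j \<in> {1..n}" "at \<sigma> j + 1 \<in> {1..n}"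
      and right: "\<forall>i\<in>{1..n}. at \<sigma> i = at \<sigma> j + 1 \<longrightarrow> j < i"
      unfolding mem_M_perm_iff by auto
    then obtain i where i: "i \<in> {1..n}" "at \<sigma> i = at \<sigma> j + 1"
      using exists_at_perm_eq by blast
    have "j < i" using right i by blast
    have "steps_up n \<sigma> J (at \<sigma> j) \<longleftrightarrow> j \<in> J"
      using steps_up_at_perm_iff[OF j(1)] right less_asym by blast
    moreover have "at ?g i = at ?g j + (if steps_up n \<sigma> J (at \<sigma> j) then 1 else 0)"
      using level_at_successor[OF i(1) j(1) i(2)] i(1) j(1) by (simp add: at_word_of_subset)
    ultimately show ?thesis
      using g.at_successor[OF i(1) j(1) i(2)] \<open>j < i\<close> by (simp split: if_splits)
  qed
  then show ?thesis using g.M_word_subset assms(2) by blast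
qed

end

theorem lemma25:
  fixes n :: nat and \<sigma> :: "nat list"
  assumes "n \<ge> 1" and "is_perm n \<sigma>"
  shows "(\<forall>f. packed_word f \<and> Std f = \<sigma> \<longrightarrow> M f \<subseteq> M \<sigma>)
         \<and> bij_betw M {f. packed_word f \<and> Std f = \<sigma>} {I. I \<subseteq> M \<sigma>}"
proof -
  interpret perm_list n \<sigma> by (rule perm_list.intro) fact
  have fibre: "{f. packed_word f \<and> Std f = \<sigma>} = {f. std_preimage n \<sigma> f}"
    unfolding std_preimage_def std_preimage_axioms_def using perm_list_axioms by blast
  have subset: "\<forall>f. packed_word f \<and> Std f = \<sigma> \<longrightarrow> M f \<subseteq> M \<sigma>"
    using std_preimage.M_word_subset fibre by blast
  have "inj_on M {f. std_preimage n \<sigma> f}"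
    by (rule inj_onI) (simp add: std_preimage_eqI)
  moreover have "M ` {f. std_preimage n \<sigma> f} = {I. I \<subseteq> M \<sigma>}"
  proof (intro equalityI subsetI)
    fix I assume "I \<in> M ` {f. std_preimage n \<sigma> f}"
    then show "I \<in> {I. I \<subseteq> M \<sigma>}" using subset fibre by blast
  next
    fix I assume "I \<in> {I. I \<subseteq> M \<sigma>}"
    then show "I \<in> M ` {f. std_preimage n \<sigma> f}"
      using std_preimage_word_of_subset[OF assms(1)] M_word_of_subset[OF assms(1)]
      by (metis (mono_tags) image_eqI mem_Collect_eq)
  qed
  ultimately show ?thesis using subset fibre by (simp add: bij_betw_def)
qed

end
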